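(* Let $\Gamma$ be a semigroup of maps $\mathbb{Z}^d \to \mathbb{Z}^d$, and suppose there is a finite set $\{s_1, \ldots, s_r\}$ of polynomial walks in $\Gamma$ such that $\{s_j(n) : n \geq 0,\ j = 1, \ldots, r\}$ generates $\Gamma$. Let $v \in \mathbb{Z}^d$ be such that the orbit $\Gamma v$ is not contained in any proper affine subspace of $\mathbb{R}^d$. Then there exists a polynomial walk $S : \mathbb{Z}_{\geq 0} \to \Gamma$ and polynomials $p_1(t), \ldots, p_d(t) \in \mathbb{Z}[t]$ such that $S(n)v = (p_1(n), \ldots, p_d(n))$ for all $n \geq 0$ and $1, p_1(t), \ldots, p_d(t)$ are linearly independent over $\mathbb{R}$. In particular, the sequence $(S(n)v)_{n \geq 0}$ is hyperplane-fleeing.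
   Context: A polynomial walk in a semigroup $\Gamma$ of maps $\mathbb{Z}^d \to \mathbb{Z}^d$ is a map $s : \mathbb{Z}_{\geq 0} \to \Gamma$ such that (1) there are polynomials $q_1, \ldots, q_d \in \mathbb{Z}[t_1, \ldots, t_{d+1}]$ with $s(n)x = (q_1(n, x_1, \ldots, x_d), \ldots, q_d(n, x_1, \ldots, x_d))$ for all $x \in \mathbb{Z}^d$ and $n \geq 0$, and (2) $s(0)$ is the identity map. A set (or sequence) in $\mathbb{R}^d$ is hyperplane-fleeing if it is not contained in any proper affine subspace of $\mathbb{R}^d$. *)

theory Defs
  imports "HOL-Analysis.Analysis" "HOL-Computational_Algebra.Polynomial"
begin

text \<open>Integer polynomial functions in variables indexed by type 'v:
  the smallest class of functions (('v \<Rightarrow> int) \<Rightarrow> int) containing constants and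
  coordinate projections, closed under sums and products; i.e. exactly the
  evaluation maps of polynomials in Z[t_v : v].\<close>
inductive int_poly_fun :: "(('v \<Rightarrow> int) \<Rightarrow> int) \<Rightarrow> bool" where
  const: "int_poly_fun (\<lambda>_. c)"
| var: "int_poly_fun (\<lambda>x. x v)"
| add: "int_poly_fun p \<Longrightarrow> int_poly_fun q \<Longrightarrow> int_poly_fun (\<lambda>x. p x + q x)"
| mult: "int_poly_fun p \<Longrightarrow> int_poly_fun q \<Longrightarrow> int_poly_fun (\<lambda>x. p x * q x)"

text \<open>Polynomial walk in \<Gamma>: variable None stands for n, Some j for x_j.\<close>
definition polynomial_walk ::
  "(int^'n \<Rightarrow> int^'n) set \<Rightarrow> (nat \<Rightarrow> (int^'n \<Rightarrow> int^'n)) \<Rightarrow> bool" where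
  "polynomial_walk \<Gamma> s \<longleftrightarrow>
     (\<forall>n. s n \<in> \<Gamma>) \<and>
     (\<forall>i. \<exists>q. int_poly_fun q \<and>
        (\<forall>n x. s n x $ i = q (\<lambda>v. case v of None \<Rightarrow> int n | Some j \<Rightarrow> x $ j))) \<and>
     s 0 = id"

inductive_set semigroup_generated :: "('a \<Rightarrow> 'a) set \<Rightarrow> ('a \<Rightarrow> 'a) set"
  for G where
  gen: "g \<in> G \<Longrightarrow> g \<in> semigroup_generated G"
| comp: "f \<in> semigroup_generated G \<Longrightarrow> g \<in> semigroup_generated G \<Longrightarrow>
         f \<circ> g \<in> semigroup_generated G"

definition real_of_intvec :: "int^'n \<Rightarrow> real^'n" where
  "real_of_intvec v = (\<chi> i. real_of_int (v $ i))"

definition hyperplane_fleeing :: "'a::real_vector set \<Rightarrow> bool" where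
  "hyperplane_fleeing S \<longleftrightarrow> (\<forall>A. affine A \<and> S \<subseteq> A \<longrightarrow> A = UNIV)"

end

theory Submission
  imports Defs
begin

text \<open>Composition and polynomial reparametrisation preserve polynomial walks, so every
  element of \<open>\<Gamma>\<close> is the value at time 1 of some walk. Given walks \<open>s\<close> and \<open>t\<close>, the
  walk \<open>n \<mapsto> t n \<circ> s (n ^ N)\<close> sees the whole two-parameter family \<open>t k (s m v)\<close> in the
  affine hull of its orbit: an affine relation vanishing along it is a polynomial in
  \<open>(m, k)\<close> vanishing on the curve \<open>(n ^ N, n)\<close>, hence zero by Kronecker substitution
  once \<open>N\<close> exceeds its degree in \<open>k\<close>. Running through a finite affine basis of the
  orbit \<open>\<Gamma> v\<close> produces a walk whose orbit has full affine hull; its coordinates are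
  integer polynomials in \<open>n\<close>, and a full affine hull is precisely the linear
  independence of \<open>1, p\<^sub>1, \<dots>, p\<^sub>d\<close>.\<close>

lemma int_poly_fun_subst:
  assumes "int_poly_fun q" "\<And>w. int_poly_fun (\<sigma> w)"
  shows "int_poly_fun (\<lambda>y. q (\<lambda>w. \<sigma> w y))"
  using assms(1) by induction (auto intro: int_poly_fun.intros assms(2))

lemma int_poly_fun_poly: "int_poly_fun (\<lambda>y. poly P (y w))"
proof (induction P rule: pCons_induct)
  case 0
  then show ?case using int_poly_fun.const[of 0] by simp
next
  case (pCons a p)
  have "int_poly_fun (\<lambda>y. a + y w * poly p (y w))"
    by (intro int_poly_fun.intros pCons.IH)
  then show ?case by simp
qed

text \<open>A bivariate polynomial is a polynomial in \<open>x\<close> whose coefficients are polynomials in \<open>y\<close>.\<close>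
definition poly2 :: "'a::comm_ring_1 poly poly \<Rightarrow> 'a \<Rightarrow> 'a \<Rightarrow> 'a" where
  "poly2 P x y = poly (poly P [:x:]) y"

lemma poly2_0 [simp]: "poly2 0 x y = 0"
  and poly2_add [simp]: "poly2 (P + Q) x y = poly2 P x y + poly2 Q x y"
  and poly2_diff [simp]: "poly2 (P - Q) x y = poly2 P x y - poly2 Q x y"
  and poly2_mult [simp]: "poly2 (P * Q) x y = poly2 P x y * poly2 Q x y"
  and poly2_smult_const [simp]: "poly2 (smult [:c:] P) x y = c * poly2 P x y"
  and poly2_const [simp]: "poly2 [:[:c:]:] x y = c"
  and poly2_var_x [simp]: "poly2 [:0, 1:] x y = x"
  and poly2_var_y [simp]: "poly2 [:[:0, 1:]:] x y = y"
  by (simp_all add: poly2_def)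

lemma poly2_sum: "poly2 (sum P A) x y = (\<Sum>i\<in>A. poly2 (P i) x y)"
  by (simp add: poly2_def poly_sum)

lemma int_poly_fun_poly2:
  fixes P :: "'v \<Rightarrow> 'a::comm_ring_1 poly poly"
  assumes "int_poly_fun q"
  shows "\<exists>Q. \<forall>x y e. (\<forall>w. of_int (e w) = poly2 (P w) x y) \<longrightarrow> of_int (q e) = poly2 Q x y"
  using assms
proof induction
  case (const c)
  show ?case by (rule exI[of _ "[:[:of_int c:]:]"]) simp
next
  case (var w)
  show ?case by (rule exI[of _ "P w"]) simp
next
  case (add p q)
  then obtain Q1 Q2 where IH:
    "\<forall>x y e. (\<forall>w. of_int (e w) = poly2 (P w) x y) \<longrightarrow> of_int (p e) = poly2 Q1 x y"
    "\<forall>x y e. (\<forall>w. of_int (e w) = poly2 (P w) x y) \<longrightarrow> of_int (q e) = poly2 Q2 x y"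
    by blast
  show ?case
  proof (intro exI[of _ "Q1 + Q2"] allI impI)
    fix x y e
    assume env: "\<forall>w. of_int (e w) = poly2 (P w) x y"
    then show "of_int (p e + q e) = poly2 (Q1 + Q2) x y"
      using IH(1)[rule_format, OF env[rule_format]] IH(2)[rule_format, OF env[rule_format]]
      by simp
  qed
next
  case (mult p q)
  then obtain Q1 Q2 where IH:
    "\<forall>x y e. (\<forall>w. of_int (e w) = poly2 (P w) x y) \<longrightarrow> of_int (p e) = poly2 Q1 x y"
    "\<forall>x y e. (\<forall>w. of_int (e w) = poly2 (P w) x y) \<longrightarrow> of_int (q e) = poly2 Q2 x y"
    by blast
  show ?case
  proof (intro exI[of _ "Q1 * Q2"] allI impI)
    fix x y e
    assume env: "\<forall>w. of_int (e w) = poly2 (P w) x y"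
    then show "of_int (p e * q e) = poly2 (Q1 * Q2) x y"
      using IH(1)[rule_format, OF env[rule_format]] IH(2)[rule_format, OF env[rule_format]]
      by simp
  qed
qed

definition inner_degree_less :: "nat \<Rightarrow> 'a::comm_ring_1 poly poly \<Rightarrow> bool" where
  "inner_degree_less N P \<longleftrightarrow> (\<forall>k. degree (coeff P k) < N)"

lemma inner_degree_less_0: "N > 0 \<Longrightarrow> inner_degree_less N 0"
  by (simp add: inner_degree_less_def)

lemma inner_degree_less_const: "N > 0 \<Longrightarrow> inner_degree_less N [:[:c:]:]"
  by (simp add: inner_degree_less_def coeff_pCons split: nat.split)

lemma inner_degree_less_add:
  "inner_degree_less N P \<Longrightarrow> inner_degree_less N Q \<Longrightarrow> inner_degree_less N (P + Q)"
  by (simp add: inner_degree_less_def degree_add_less)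

lemma inner_degree_less_diff:
  "inner_degree_less N P \<Longrightarrow> inner_degree_less N Q \<Longrightarrow> inner_degree_less N (P - Q)"
  by (simp add: inner_degree_less_def degree_diff_less)

lemma inner_degree_less_smult_const:
  "inner_degree_less N P \<Longrightarrow> inner_degree_less N (smult [:c:] P)"
  unfolding inner_degree_less_def by (auto intro: le_less_trans[OF degree_smult_le])

lemma inner_degree_less_sum:
  "N > 0 \<Longrightarrow> (\<And>i. i \<in> A \<Longrightarrow> inner_degree_less N (P i)) \<Longrightarrow> inner_degree_less N (sum P A)"
  by (induction A rule: infinite_finite_induct)
     (auto intro: inner_degree_less_0 inner_degree_less_add)

lemma inner_degree_bound:
  fixes P :: "'i::finite \<Rightarrow> 'a::comm_ring_1 poly poly"
  obtains N where "N > 0" "\<And>i. inner_degree_less N (P i)"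
proof
  define N where "N = Suc (\<Sum>i\<in>UNIV. \<Sum>k\<le>degree (P i). degree (coeff (P i) k))"
  show "N > 0" by (simp add: N_def)
  show "inner_degree_less N (P i)" for i
    unfolding inner_degree_less_def
  proof
    fix k
    show "degree (coeff (P i) k) < N"
    proof (cases "k \<le> degree (P i)")
      case True
      have "degree (coeff (P i) k) \<le> (\<Sum>k\<le>degree (P i). degree (coeff (P i) k))"
        by (rule member_le_sum) (use True in auto)
      also have "\<dots> \<le> (\<Sum>i\<in>UNIV. \<Sum>k\<le>degree (P i). degree (coeff (P i) k))"
        by (rule member_le_sum) auto
      finally show ?thesis unfolding N_def by simp
    qed (simp add: coeff_eq_0 N_def)
  qed
qed

text \<open>Kronecker substitution \<open>x \<mapsto> y ^ N\<close>: below inner degree \<open>N\<close> the coefficients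
  of different powers of \<open>x\<close> land on disjoint ranges of powers of \<open>y\<close>.\<close>
definition kronecker :: "nat \<Rightarrow> 'a::comm_ring_1 poly poly \<Rightarrow> 'a poly" where
  "kronecker N P = poly P (monom 1 N)"

lemma poly_poly_const_poly: "poly (poly P q) x = poly (poly P [:poly q x:]) x"
  by (induction P rule: pCons_induct) simp_all

lemma poly_kronecker: "poly (kronecker N P) x = poly2 P (x ^ N) x"
  using poly_poly_const_poly[of P "monom 1 N" x] by (simp add: kronecker_def poly2_def poly_monom)

lemma kronecker_pCons: "kronecker N (pCons c P) = c + monom 1 N * kronecker N P"
  by (simp add: kronecker_def)

lemma coeff_kronecker:
  assumes "inner_degree_less N P" "j < N"
  shows "coeff (kronecker N P) (k * N + j) = coeff (coeff P k) j"
  using assms(1)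
proof (induction P arbitrary: k rule: pCons_induct)
  case 0
  then show ?case by (simp add: kronecker_def)
next
  case (pCons c P)
  have P: "inner_degree_less N P"
    using pCons.prems unfolding inner_degree_less_def by (metis coeff_pCons_Suc)
  have c: "degree c < N"
    using pCons.prems unfolding inner_degree_less_def by (metis coeff_pCons_0)
  show ?case
  proof (cases k)
    case 0
    then show ?thesis using assms(2) by (simp add: kronecker_pCons coeff_monom_mult)
  next
    case (Suc k')
    have le: "N \<le> k * N + j" using Suc by simp
    have "coeff c (k * N + j) = 0" using c le by (intro coeff_eq_0) simp
    moreover have "k * N + j - N = k' * N + j" using Suc by simp
    ultimately show ?thesis using pCons.IH[OF P, of k'] le Suc
      by (simp add: kronecker_pCons coeff_monom_mult not_less)
  qed
qed

lemma kronecker_eq_0_imp_eq_0: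
  assumes "inner_degree_less N P" "kronecker N P = 0"
  shows "P = 0"
proof -
  have "coeff (coeff P k) j = 0" for k j
  proof (cases "j < N")
    case True
    then show ?thesis using coeff_kronecker[OF assms(1) True, of k] assms(2) by simp
  next
    case False
    then show ?thesis using assms(1) unfolding inner_degree_less_def
      by (intro coeff_eq_0) (meson leI less_le_trans)
  qed
  then show ?thesis by (intro poly_eqI) simp
qed

lemma poly2_eq_0_if_vanishes_on_power_curve:
  fixes P :: "'a::{idom,ring_char_0} poly poly"
  assumes "inner_degree_less N P" "\<And>n. poly2 P (of_nat n ^ N) (of_nat n) = 0"
  shows "P = 0"
proof (rule kronecker_eq_0_imp_eq_0[OF assms(1)], rule ccontr)
  assume "kronecker N P \<noteq> 0"
  then have "finite {x. poly (kronecker N P) x = 0}" by (rule poly_roots_finite)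
  moreover have "range (of_nat :: nat \<Rightarrow> 'a) \<subseteq> {x. poly (kronecker N P) x = 0}"
    using assms(2) by (auto simp: poly_kronecker)
  ultimately show False
    using range_inj_infinite[OF inj_of_nat] finite_subset by blast
qed

definition walk_args :: "nat \<Rightarrow> int^'n \<Rightarrow> 'n option \<Rightarrow> int" where
  "walk_args n x = (\<lambda>w. case w of None \<Rightarrow> int n | Some j \<Rightarrow> x $ j)"

definition polynomial_family :: "(nat \<Rightarrow> int^'n \<Rightarrow> int^'n) \<Rightarrow> bool" where
  "polynomial_family s \<longleftrightarrow> (\<forall>i. \<exists>q. int_poly_fun q \<and> (\<forall>n x. s n x $ i = q (walk_args n x)))"

lemma polynomial_walk_iff:
  "polynomial_walk \<Gamma> s \<longleftrightarrow> (\<forall>n. s n \<in> \<Gamma>) \<and> polynomial_family s \<and> s 0 = id"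
  by (simp add: polynomial_walk_def polynomial_family_def walk_args_def)

lemma polynomial_familyE:
  fixes s :: "nat \<Rightarrow> int^'n \<Rightarrow> int^'n"
  assumes "polynomial_family s"
  obtains q where "\<And>i. int_poly_fun (q i)" "\<And>i n x. s n x $ i = q i (walk_args n x)"
  using assms unfolding polynomial_family_def by metis

lemma polynomial_family_substI:
  assumes "\<And>i. int_poly_fun (q i)" "\<And>w. int_poly_fun (\<sigma> w)"
    and "\<And>i n x. s n x $ i = q i (\<lambda>w. \<sigma> w (walk_args n x))"
  shows "polynomial_family s"
  unfolding polynomial_family_def
proof
  fix i
  have "int_poly_fun (\<lambda>y. q i (\<lambda>w. \<sigma> w y))"
    by (rule int_poly_fun_subst[OF assms(1,2)])
  then show "\<exists>q'. int_poly_fun q' \<and> (\<forall>n x. s n x $ i = q' (walk_args n x))"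
    by (intro exI[of _ "\<lambda>y. q i (\<lambda>w. \<sigma> w y)"]) (simp add: assms(3))
qed

lemma polynomial_family_id: "polynomial_family (\<lambda>_. id)"
  unfolding polynomial_family_def walk_args_def
  by (auto intro!: exI[of _ "\<lambda>y. y (Some _)"] int_poly_fun.var)

lemma polynomial_family_comp:
  fixes s t :: "nat \<Rightarrow> int^'n \<Rightarrow> int^'n"
  assumes "polynomial_family s" "polynomial_family t"
  shows "polynomial_family (\<lambda>n. s n \<circ> t n)"
proof -
  obtain qs where qs: "\<And>i. int_poly_fun (qs i)" "\<And>i n x. s n x $ i = qs i (walk_args n x)"
    using polynomial_familyE[OF assms(1)] by blast
  obtain qt where qt: "\<And>i. int_poly_fun (qt i)" "\<And>i n x. t n x $ i = qt i (walk_args n x)"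
    using polynomial_familyE[OF assms(2)] by blast
  define \<sigma> where "\<sigma> = (\<lambda>w. case w of None \<Rightarrow> (\<lambda>y. y None) | Some j \<Rightarrow> qt j)"
  have \<sigma>: "int_poly_fun (\<sigma> w)" for w
    using qt(1) by (cases w) (auto simp: \<sigma>_def intro: int_poly_fun.var)
  have "walk_args n (t n x) = (\<lambda>w. \<sigma> w (walk_args n x))" for n x
    by (auto simp: walk_args_def \<sigma>_def qt(2) split: option.split)
  then have "(s n \<circ> t n) x $ i = qs i (\<lambda>w. \<sigma> w (walk_args n x))" for i n x
    by (simp add: qs(2))
  with qs(1) \<sigma> show ?thesis by (rule polynomial_family_substI)
qed

lemma polynomial_family_reparam:
  fixes s :: "nat \<Rightarrow> int^'n \<Rightarrow> int^'n"
  assumes "polynomial_family s" "\<And>n. int (\<alpha> n) = poly P (int n)"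
  shows "polynomial_family (\<lambda>n. s (\<alpha> n))"
proof -
  obtain q where q: "\<And>i. int_poly_fun (q i)" "\<And>i n x. s n x $ i = q i (walk_args n x)"
    using polynomial_familyE[OF assms(1)] by blast
  define \<sigma> :: "'n option \<Rightarrow> ('n option \<Rightarrow> int) \<Rightarrow> int" where
    "\<sigma> = (\<lambda>w. case w of None \<Rightarrow> (\<lambda>y. poly P (y None)) | Some j \<Rightarrow> (\<lambda>y. y (Some j)))"
  have \<sigma>: "int_poly_fun (\<sigma> w)" for w
    by (cases w) (auto simp: \<sigma>_def intro: int_poly_fun.var int_poly_fun_poly)
  have "walk_args (\<alpha> n) x = (\<lambda>w. \<sigma> w (walk_args n x))" for n x
    by (auto simp: walk_args_def \<sigma>_def assms(2) split: option.split)
  then have "s (\<alpha> n) x $ i = q i (\<lambda>w. \<sigma> w (walk_args n x))" for i n x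
    by (simp add: q(2))
  with q(1) \<sigma> show ?thesis by (rule polynomial_family_substI)
qed

lemma polynomial_family_orbit_poly2:
  fixes s t :: "nat \<Rightarrow> int^'n \<Rightarrow> int^'n"
  assumes "polynomial_family s" "polynomial_family t"
  obtains Q :: "'n \<Rightarrow> 'a::comm_ring_1 poly poly"
    where "\<And>i m k. of_int (t k (s m v) $ i) = poly2 (Q i) (of_nat m) (of_nat k)"
proof -
  obtain qs where qs: "\<And>i. int_poly_fun (qs i)" "\<And>i n x. s n x $ i = qs i (walk_args n x)"
    using polynomial_familyE[OF assms(1)] by blast
  obtain qt where qt: "\<And>i. int_poly_fun (qt i)" "\<And>i n x. t n x $ i = qt i (walk_args n x)"
    using polynomial_familyE[OF assms(2)] by blast
  \<comment> \<open>the time \<open>m\<close> of \<open>s\<close> becomes the outer variable, the time \<open>k\<close> of \<open>t\<close> the inner one\<close>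
  define Ps :: "'n option \<Rightarrow> 'a poly poly" where
    "Ps = (\<lambda>w. case w of None \<Rightarrow> [:0, 1:] | Some j \<Rightarrow> [:[:of_int (v $ j):]:])"
  obtain Qs where Qs: "\<forall>i x y e. (\<forall>w. of_int (e w) = poly2 (Ps w) x y) \<longrightarrow>
      of_int (qs i e) = poly2 (Qs i) x y"
    using int_poly_fun_poly2[OF qs(1), of Ps] by metis
  have s_poly2: "of_int (s m v $ j) = poly2 (Qs j) (of_nat m) y" for m j y
    using Qs qs(2) by (auto simp: Ps_def walk_args_def split: option.split)
  define Pt :: "'n option \<Rightarrow> 'a poly poly" where
    "Pt = (\<lambda>w. case w of None \<Rightarrow> [:[:0, 1:]:] | Some j \<Rightarrow> Qs j)"
  obtain Qt where Qt: "\<forall>i x y e. (\<forall>w. of_int (e w) = poly2 (Pt w) x y) \<longrightarrow>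
      of_int (qt i e) = poly2 (Qt i) x y"
    using int_poly_fun_poly2[OF qt(1), of Pt] by metis
  show thesis
  proof
    fix i m k
    have "\<forall>w. of_int (walk_args k (s m v) w) = poly2 (Pt w) (of_nat m) (of_nat k)"
      using s_poly2 by (auto simp: Pt_def walk_args_def split: option.split)
    then show "of_int (t k (s m v) $ i) = poly2 (Qt i) (of_nat m) (of_nat k)"
      using Qt qt(2) by metis
  qed
qed

lemma polynomial_family_orbit_poly:
  fixes s :: "nat \<Rightarrow> int^'n \<Rightarrow> int^'n"
  assumes "polynomial_family s"
  obtains p :: "'n \<Rightarrow> int poly" where "\<And>i n. s n v $ i = poly (p i) (int n)"
proof -
  obtain Q :: "'n \<Rightarrow> int poly poly" where "\<And>i m k. s k v $ i = poly2 (Q i) (int m) (int k)"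
    using polynomial_family_orbit_poly2[OF polynomial_family_id assms, where v = v]
    by (metis of_int_eq_id id_apply)
  from this[where m = 0] show thesis
    by (intro that[of "\<lambda>i. poly (Q i) 0"]) (simp add: poly2_def)
qed

lemma polynomial_walk_comp:
  assumes "\<And>f g. f \<in> \<Gamma> \<Longrightarrow> g \<in> \<Gamma> \<Longrightarrow> f \<circ> g \<in> \<Gamma>"
    and "polynomial_walk \<Gamma> s" "polynomial_walk \<Gamma> t"
  shows "polynomial_walk \<Gamma> (\<lambda>n. s n \<circ> t n)"
  using assms polynomial_family_comp unfolding polynomial_walk_iff by auto

lemma polynomial_walk_reparam:
  assumes "polynomial_walk \<Gamma> s" "\<alpha> 0 = 0" "\<And>n. int (\<alpha> n) = poly P (int n)"
  shows "polynomial_walk \<Gamma> (\<lambda>n. s (\<alpha> n))"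
  using assms polynomial_family_reparam unfolding polynomial_walk_iff by auto

lemma polynomial_walk_through_generated:
  assumes "g \<in> semigroup_generated {s j n | j n. j < r}"
    and "\<And>j. j < r \<Longrightarrow> polynomial_walk \<Gamma> (s j)"
    and "\<And>f g. f \<in> \<Gamma> \<Longrightarrow> g \<in> \<Gamma> \<Longrightarrow> f \<circ> g \<in> \<Gamma>"
  shows "\<exists>t. polynomial_walk \<Gamma> t \<and> t 1 = g"
  using assms(1)
proof induction
  case (gen g)
  then obtain j m where "j < r" "g = s j m" by blast
  moreover have "polynomial_walk \<Gamma> (\<lambda>n. s j (m * n))" if "j < r"
    by (rule polynomial_walk_reparam[OF assms(2)[OF that], of _ "[:0, int m:]"]) auto
  ultimately show ?case by auto
next
  case (comp f g)
  then obtain t1 t2 where "polynomial_walk \<Gamma> t1" "t1 1 = f" "polynomial_walk \<Gamma> t2" "t2 1 = g"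
    by blast
  with polynomial_walk_comp[OF assms(3)] show ?case
    by (intro exI[of _ "\<lambda>n. t1 n \<circ> t2 n"]) (simp del: comp_apply)
qed

lemma hyperplane_fleeing_iff_affine_hull: "hyperplane_fleeing S \<longleftrightarrow> affine hull S = UNIV"
  unfolding hyperplane_fleeing_def
  by (metis affine_affine_hull hull_minimal hull_subset top.extremum_uniqueI)

lemma mem_affine_hull_iff_hyperplanes:
  fixes C :: "'a::euclidean_space set"
  shows "x \<in> affine hull C \<longleftrightarrow> (\<forall>a b. C \<subseteq> {y. a \<bullet> y = b} \<longrightarrow> a \<bullet> x = b)"
proof
  assume x: "x \<in> affine hull C"
  show "\<forall>a b. C \<subseteq> {y. a \<bullet> y = b} \<longrightarrow> a \<bullet> x = b"
  proof (intro allI impI)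
    fix a b
    assume "C \<subseteq> {y. a \<bullet> y = b}"
    then have "affine hull C \<subseteq> {y. a \<bullet> y = b}"
      using affine_hyperplane by (rule hull_minimal)
    with x show "a \<bullet> x = b" by blast
  qed
next
  assume hyp: "\<forall>a b. C \<subseteq> {y. a \<bullet> y = b} \<longrightarrow> a \<bullet> x = b"
  obtain \<F> where \<F>: "affine hull C = \<Inter>\<F>" "\<And>h. h \<in> \<F> \<Longrightarrow> \<exists>a b. a \<noteq> 0 \<and> h = {y. a \<bullet> y = b}"
    using affine_hull_finite_intersection_hyperplanes[of C] by metis
  have "x \<in> h" if h\<F>: "h \<in> \<F>" for h
  proof -
    obtain a b where h: "h = {y. a \<bullet> y = b}" using \<F>(2)[OF h\<F>] by blast
    have "C \<subseteq> h" using \<F>(1) h\<F> hull_subset[of C affine] by blast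
    then show ?thesis using hyp h by blast
  qed
  then show "x \<in> affine hull C" using \<F>(1) by blast
qed

lemma hyperplane_trivial_if_affine_hull_UNIV:
  fixes C :: "'a::euclidean_space set"
  assumes "affine hull C = UNIV" "C \<subseteq> {y. a \<bullet> y = b}"
  shows "a = 0 \<and> b = 0"
proof -
  have "a \<bullet> x = b" for x
    using assms mem_affine_hull_iff_hyperplanes by blast
  from this[of 0] this[of a] show ?thesis by simp
qed

lemma inner_real_of_intvec: "a \<bullet> real_of_intvec w = (\<Sum>i\<in>UNIV. a $ i * real_of_int (w $ i))"
  by (simp add: inner_vec_def real_of_intvec_def)

lemma poly_map_poly_of_int:
  "poly (map_poly (of_int :: int \<Rightarrow> 'a::comm_ring_1) p) (of_int x) = of_int (poly p x)"
  by (induction p rule: pCons_induct) (simp_all add: map_poly_pCons)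

lemma polynomial_walk_covering_product:
  fixes s t :: "nat \<Rightarrow> int^'n \<Rightarrow> int^'n"
  assumes "\<And>f g. f \<in> \<Gamma> \<Longrightarrow> g \<in> \<Gamma> \<Longrightarrow> f \<circ> g \<in> \<Gamma>"
    and s: "polynomial_walk \<Gamma> s" and t: "polynomial_walk \<Gamma> t"
  obtains u where "polynomial_walk \<Gamma> u"
    "\<And>m k. real_of_intvec (t k (s m v)) \<in> affine hull range (\<lambda>n. real_of_intvec (u n v))"
proof -
  obtain Q :: "'n \<Rightarrow> real poly poly"
    where Q: "\<And>i m k. real_of_int (t k (s m v) $ i) = poly2 (Q i) (real m) (real k)"
    using polynomial_family_orbit_poly2 s t unfolding polynomial_walk_iff by metis
  obtain N where N: "N > 0" "\<And>i. inner_degree_less N (Q i)"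
    using inner_degree_bound by blast
  define u where "u = (\<lambda>n. t n \<circ> s (n ^ N))"
  have "polynomial_walk \<Gamma> (\<lambda>n. s (n ^ N))"
    by (rule polynomial_walk_reparam[OF s, of _ "monom 1 N"]) (use N(1) in \<open>auto simp: poly_monom\<close>)
  with assms(1) t have "polynomial_walk \<Gamma> u"
    unfolding u_def by (rule polynomial_walk_comp)
  moreover have "real_of_intvec (t k (s m v)) \<in> affine hull range (\<lambda>n. real_of_intvec (u n v))"
    for m k
    unfolding mem_affine_hull_iff_hyperplanes
  proof (intro allI impI)
    fix a b
    assume "range (\<lambda>n. real_of_intvec (u n v)) \<subseteq> {y. a \<bullet> y = b}"
    then have on_curve: "a \<bullet> real_of_intvec (t n (s (n ^ N) v)) = b" for n
      by (auto simp: u_def)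
    define R where "R = (\<Sum>i\<in>UNIV. smult [:a $ i:] (Q i)) - [:[:b:]:]"
    have R: "poly2 R (real m) (real k) = a \<bullet> real_of_intvec (t k (s m v)) - b" for m k
      by (simp add: R_def poly2_sum inner_real_of_intvec Q)
    have "inner_degree_less N R"
      unfolding R_def using N
      by (intro inner_degree_less_diff inner_degree_less_sum inner_degree_less_smult_const
          inner_degree_less_const)
    moreover have "poly2 R (of_nat n ^ N) (of_nat n) = 0" for n
      using R[of "n ^ N" n] on_curve[of n] by simp
    ultimately have "R = 0" by (rule poly2_eq_0_if_vanishes_on_power_curve)
    then show "a \<bullet> real_of_intvec (t k (s m v)) = b" using R[of m k] by simp
  qed
  ultimately show thesis by (rule that)
qed

lemma finite_orbit_subset_walk_hull:
  fixes \<Gamma> :: "(int^'n \<Rightarrow> int^'n) set"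
  assumes closed: "\<And>f g. f \<in> \<Gamma> \<Longrightarrow> g \<in> \<Gamma> \<Longrightarrow> f \<circ> g \<in> \<Gamma>"
    and through: "\<And>g. g \<in> \<Gamma> \<Longrightarrow> \<exists>t. polynomial_walk \<Gamma> t \<and> t 1 = g"
    and "\<Gamma> \<noteq> {}" "finite B" "B \<subseteq> {real_of_intvec (g v) | g. g \<in> \<Gamma>}"
  shows "\<exists>s. polynomial_walk \<Gamma> s \<and> B \<subseteq> affine hull range (\<lambda>n. real_of_intvec (s n v))"
  using \<open>finite B\<close> \<open>B \<subseteq> _\<close>
proof (induction B rule: finite_induct)
  case empty
  then show ?case using through \<open>\<Gamma> \<noteq> {}\<close> by blast
next
  case (insert x B)
  then obtain s where s: "polynomial_walk \<Gamma> s" "B \<subseteq> affine hull range (\<lambda>n. real_of_intvec (s n v))"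
    by auto
  obtain t where x: "x = real_of_intvec (t 1 (s 0 v))" and t: "polynomial_walk \<Gamma> t"
    using insert.prems through s(1) unfolding polynomial_walk_iff by fastforce
  obtain u where u: "polynomial_walk \<Gamma> u"
    "\<And>m k. real_of_intvec (t k (s m v)) \<in> affine hull range (\<lambda>n. real_of_intvec (u n v))"
    using polynomial_walk_covering_product[OF closed s(1) t] by blast
  have "range (\<lambda>n. real_of_intvec (s n v)) \<subseteq> affine hull range (\<lambda>n. real_of_intvec (u n v))"
    using u(2)[where k = 0] t by (auto simp: polynomial_walk_iff)
  then have "affine hull range (\<lambda>n. real_of_intvec (s n v))
      \<subseteq> affine hull range (\<lambda>n. real_of_intvec (u n v))"
    using affine_affine_hull by (rule hull_minimal)
  with s(2) u x show ?case by blast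
qed

lemma polynomial_walk_with_full_affine_hull:
  fixes \<Gamma> :: "(int^'n \<Rightarrow> int^'n) set"
  assumes "\<And>f g. f \<in> \<Gamma> \<Longrightarrow> g \<in> \<Gamma> \<Longrightarrow> f \<circ> g \<in> \<Gamma>"
    and "\<And>g. g \<in> \<Gamma> \<Longrightarrow> \<exists>t. polynomial_walk \<Gamma> t \<and> t 1 = g"
    and orbit_hull: "affine hull {real_of_intvec (g v) | g. g \<in> \<Gamma>} = UNIV"
  obtains s where "polynomial_walk \<Gamma> s" "affine hull range (\<lambda>n. real_of_intvec (s n v)) = UNIV"
proof -
  obtain B where B: "B \<subseteq> {real_of_intvec (g v) | g. g \<in> \<Gamma>}" "\<not> affine_dependent B"
    "affine hull {real_of_intvec (g v) | g. g \<in> \<Gamma>} = affine hull B"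
    using affine_basis_exists by blast
  have "\<Gamma> \<noteq> {}" using orbit_hull by auto
  then obtain s where s: "polynomial_walk \<Gamma> s"
    "B \<subseteq> affine hull range (\<lambda>n. real_of_intvec (s n v))"
    using finite_orbit_subset_walk_hull[OF assms(1,2) _ aff_independent_finite[OF B(2)] B(1)]
    by blast
  have "affine hull B \<subseteq> affine hull range (\<lambda>n. real_of_intvec (s n v))"
    using s(2) affine_affine_hull by (rule hull_minimal)
  with B(3) orbit_hull s(1) that show thesis by auto
qed

lemma poly_coordinates_independent_if_affine_hull_UNIV:
  fixes f :: "nat \<Rightarrow> int^'n" and p :: "'n \<Rightarrow> int poly"
  assumes p: "\<And>i n. f n $ i = poly (p i) (int n)"
    and "affine hull range (\<lambda>n. real_of_intvec (f n)) = UNIV"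
    and relation: "[:c0:] + (\<Sum>i\<in>UNIV. smult (c i) (map_poly real_of_int (p i))) = 0"
  shows "c0 = 0 \<and> (\<forall>i. c i = 0)"
proof -
  have "poly ([:c0:] + (\<Sum>i\<in>UNIV. smult (c i) (map_poly real_of_int (p i)))) (of_int (int n)) = 0"
    for n
    using relation by simp
  then have "range (\<lambda>n. real_of_intvec (f n)) \<subseteq> {y. (\<chi> i. c i) \<bullet> y = - c0}"
    by (auto simp: poly_sum poly_map_poly_of_int inner_real_of_intvec p add_eq_0_iff
        simp del: of_int_of_nat_eq)
  from hyperplane_trivial_if_affine_hull_UNIV[OF assms(2) this]
  show ?thesis by (simp add: vec_eq_iff)
qed

theorem theorem2p3:
  fixes \<Gamma> :: "(int^'n \<Rightarrow> int^'n) set"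
    and r :: nat
    and s :: "nat \<Rightarrow> nat \<Rightarrow> (int^'n \<Rightarrow> int^'n)"
    and v :: "int^'n"
  assumes semigroup: "\<And>f g. f \<in> \<Gamma> \<Longrightarrow> g \<in> \<Gamma> \<Longrightarrow> f \<circ> g \<in> \<Gamma>"
    and walks: "\<And>j. j < r \<Longrightarrow> polynomial_walk \<Gamma> (s j)"
    and generates: "\<Gamma> = semigroup_generated {s j n | j n. j < r}"
    and fleeing: "hyperplane_fleeing {real_of_intvec (g v) | g. g \<in> \<Gamma>}"
  shows "\<exists>S (p :: 'n \<Rightarrow> int poly).
           polynomial_walk \<Gamma> S \<and>
           (\<forall>n i. S n v $ i = poly (p i) (int n)) \<and>
           (\<forall>(c0::real) (c :: 'n \<Rightarrow> real).
              [:c0:] + (\<Sum>i\<in>UNIV. smult (c i) (map_poly real_of_int (p i))) = 0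
              \<longrightarrow> c0 = 0 \<and> (\<forall>i. c i = 0)) \<and>
           hyperplane_fleeing (range (\<lambda>n. real_of_intvec (S n v)))"
proof -
  have "affine hull {real_of_intvec (g v) | g. g \<in> \<Gamma>} = UNIV"
    using fleeing hyperplane_fleeing_iff_affine_hull by blast
  moreover have "\<exists>t. polynomial_walk \<Gamma> t \<and> t 1 = g" if "g \<in> \<Gamma>" for g
    using polynomial_walk_through_generated[of g s r \<Gamma>] that generates walks semigroup by blast
  ultimately obtain S where S: "polynomial_walk \<Gamma> S"
    and curve_hull: "affine hull range (\<lambda>n. real_of_intvec (S n v)) = UNIV"
    using polynomial_walk_with_full_affine_hull[OF semigroup] by blast
  obtain p where p: "\<And>i n. S n v $ i = poly (p i) (int n)"
    using polynomial_family_orbit_poly S unfolding polynomial_walk_iff by metis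
  have "\<forall>c0 c. [:c0:] + (\<Sum>i\<in>UNIV. smult (c i) (map_poly real_of_int (p i))) = 0
      \<longrightarrow> c0 = 0 \<and> (\<forall>i. c i = 0)"
    using poly_coordinates_independent_if_affine_hull_UNIV[OF p curve_hull] by blast
  with S p curve_hull show ?thesis
    unfolding hyperplane_fleeing_iff_affine_hull by blast
qed

end
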